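(* Let $n\ge 1$ be an integer and let $A_1,A_2,A_4>0$ be constants. For each $\alpha$ in some interval $(0,\alpha_0)$ let $u^\alpha,\bar u^\alpha:\mathbb{R}\to\mathbb{R}$ be functions with $u^\alpha\in C^1(\mathbb{R})$ and $\bar u^\alpha\in C^{2n}(\mathbb{R})$ satisfying $$|u^\alpha|<A_1,\quad |\bar u^\alpha|<A_1,\qquad \int_{\mathbb{R}}|u^\alpha_x|\,dx<A_2,\quad \int_{\mathbb{R}}|\bar u^\alpha_x|\,dx<A_2,$$ $$\left\|\frac{\partial^j}{\partial x^j}\bar u^\alpha\right\|_{L^\infty}<\frac{A_4}{\alpha^j}\qquad\text{for } 1\le j\le 2n-1.$$ Let $f\in C^\infty(\mathbb{R})$ have compact support. Then $$\lim_{\alpha\to 0}\ \alpha^{2n}\int_{-\infty}^{\infty}\left(\frac{\partial^{2n}}{\partial x^{2n}}\bar u^\alpha\right)\bar u^\alpha_x\, f\,dx=0.$$ *)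

theory Defs
  imports "HOL-Analysis.Analysis"
begin

definition Ck :: "nat \<Rightarrow> (real \<Rightarrow> real) \<Rightarrow> bool" where
  "Ck k f \<longleftrightarrow>
     (\<forall>j<k. \<forall>x. ((deriv ^^ j) f has_real_derivative (deriv ^^ Suc j) f x) (at x))
     \<and> continuous_on UNIV ((deriv ^^ k) f)"

definition Cinf :: "(real \<Rightarrow> real) \<Rightarrow> bool" where
  "Cinf f \<longleftrightarrow> (\<forall>k. Ck k f)"

definition has_compact_support :: "(real \<Rightarrow> real) \<Rightarrow> bool" where
  "has_compact_support f \<longleftrightarrow> compact (closure {x. f x \<noteq> 0})"

end

theory Submission
  imports Defs
begin

(* Let N = 2n - 1 and I(p,q,c) = \<integral> ubar^(p+1) ubar^(q+1) f^(c). Since f has compact support,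
   integration by parts gives I(p+1,q,c) + I(p,q+1,c) + I(p,q,c+1) = 0. Applying it N times moves all
   derivatives from the first factor to the second: I(N,0,0) = (-1)^N I(0,N,0) up to terms I(p,0,c+1)
   with p < N, in which a derivative has landed on f. As N is odd and I is symmetric in p and q,
   2 I(N,0,0) is a sum of such terms. By the sup bound on ubar^(p+1) and the L1 bound on ubar', each of
   them is O(\<alpha>^-(p+1)), hence o(\<alpha>^-2n). *)

lemma Ck_has_real_derivative:
  assumes "Ck k g" "j < k"
  shows "((deriv ^^ j) g has_real_derivative (deriv ^^ Suc j) g x) (at x)"
  using assms unfolding Ck_def by blast

lemma Ck_continuous_on:
  assumes "Ck k g" "j \<le> k"
  shows "continuous_on S ((deriv ^^ j) g)"
proof (cases "j = k")
  case True
  then show ?thesis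
    using assms(1) unfolding Ck_def by (blast intro: continuous_on_subset)
next
  case False
  then show ?thesis
    using Ck_has_real_derivative[OF assms(1), of j] assms(2)
    by (meson DERIV_isCont continuous_at_imp_continuous_on le_neq_implies_less)
qed

lemma Cinf_has_real_derivative:
  "Cinf g \<Longrightarrow> ((deriv ^^ j) g has_real_derivative (deriv ^^ Suc j) g x) (at x)"
  unfolding Cinf_def by (blast intro: Ck_has_real_derivative[of "Suc j"])

lemma Cinf_continuous_on: "Cinf g \<Longrightarrow> continuous_on S ((deriv ^^ j) g)"
  unfolding Cinf_def by (blast intro: Ck_continuous_on[of j])

lemma has_compact_support_vanishes_outside:
  assumes "has_compact_support g"
  obtains B where "0 \<le> B" "\<And>x. B < \<bar>x\<bar> \<Longrightarrow> g x = 0"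
proof -
  obtain B where B: "\<And>x. x \<in> closure {x. g x \<noteq> 0} \<Longrightarrow> \<bar>x\<bar> \<le> B"
    using compact_imp_bounded[OF assms[unfolded has_compact_support_def]]
    unfolding bounded_iff real_norm_def by blast
  have "g x = 0" if "\<bar>B\<bar> < \<bar>x\<bar>" for x
  proof (rule ccontr)
    assume "g x \<noteq> 0"
    then have "x \<in> closure {x. g x \<noteq> 0}"
      by (simp add: closure_def)
    then have "\<bar>x\<bar> \<le> B"
      by (rule B)
    with that show False by linarith
  qed
  then show ?thesis using that[of "\<bar>B\<bar>"] by simp
qed

lemma deriv_iterate_vanishes_outside:
  fixes g :: "real \<Rightarrow> real"
  assumes "\<And>y. B < \<bar>y\<bar> \<Longrightarrow> g y = 0" "B < \<bar>x\<bar>"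
  shows "(deriv ^^ k) g x = 0"
  using assms(2)
proof (induction k arbitrary: x)
  case 0
  then show ?case by (simp add: assms(1))
next
  case (Suc k)
  have "((deriv ^^ k) g has_real_derivative 0) (at x)"
    by (rule has_field_derivative_transform_within_open[of "\<lambda>_. 0" _ _ "{y. B < \<bar>y\<bar>}"])
       (use Suc in \<open>auto intro!: open_Collect_less continuous_intros\<close>)
  then show ?case by (simp add: DERIV_imp_deriv)
qed

lemma integral_product3_by_parts:
  fixes g h \<phi> :: "real \<Rightarrow> real"
  assumes "a \<le> b"
    and g: "\<And>x. (g has_real_derivative g' x) (at x)" and h: "\<And>x. (h has_real_derivative h' x) (at x)"
    and \<phi>: "\<And>x. (\<phi> has_real_derivative \<phi>' x) (at x)"
    and cont: "continuous_on {a..b} g'" "continuous_on {a..b} h'" "continuous_on {a..b} \<phi>'"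
    and "\<phi> a = 0" "\<phi> b = 0"
  shows "integral {a..b} (\<lambda>x. g' x * h x * \<phi> x) + integral {a..b} (\<lambda>x. g x * h' x * \<phi> x)
       + integral {a..b} (\<lambda>x. g x * h x * \<phi>' x) = 0"
proof -
  have "continuous_on {a..b} g" "continuous_on {a..b} h" "continuous_on {a..b} \<phi>"
    using g h \<phi> by (meson DERIV_isCont continuous_at_imp_continuous_on)+
  with cont have int: "(\<lambda>x. g' x * h x * \<phi> x) integrable_on {a..b}"
    "(\<lambda>x. g x * h' x * \<phi> x) integrable_on {a..b}" "(\<lambda>x. g x * h x * \<phi>' x) integrable_on {a..b}"
    by (auto intro!: integrable_continuous_interval continuous_intros)
  have "((\<lambda>x. g' x * h x * \<phi> x + g x * h' x * \<phi> x + g x * h x * \<phi>' x) has_integral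
          g b * h b * \<phi> b - g a * h a * \<phi> a) {a..b}"
  proof (rule fundamental_theorem_of_calculus[OF \<open>a \<le> b\<close>])
    fix x
    have "((\<lambda>x. g x * h x * \<phi> x) has_real_derivative
            g' x * h x * \<phi> x + g x * h' x * \<phi> x + g x * h x * \<phi>' x) (at x)"
      using DERIV_mult[OF DERIV_mult[OF g h] \<phi>] by (simp add: algebra_simps)
    then show "((\<lambda>x. g x * h x * \<phi> x) has_vector_derivative
            g' x * h x * \<phi> x + g x * h' x * \<phi> x + g x * h x * \<phi>' x) (at x within {a..b})"
      by (simp add: has_real_derivative_iff_has_vector_derivative has_vector_derivative_at_within)
  qed
  then have "integral {a..b} (\<lambda>x. g' x * h x * \<phi> x + g x * h' x * \<phi> x + g x * h x * \<phi>' x) = 0"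
    using assms(8,9) by (simp add: integral_unique)
  then show ?thesis
    using int by (simp add: integral_add integrable_add)
qed

lemma lborel_integral_eq_integral_interval:
  fixes g :: "real \<Rightarrow> real"
  assumes "continuous_on {a..b} g" "\<And>x. x \<notin> {a..b} \<Longrightarrow> g x = 0"
  shows "(\<integral>x. g x \<partial>lborel) = integral {a..b} g"
proof -
  have "(\<integral>x. g x \<partial>lborel) = (LINT x : {a..b} | lborel. g x)"
    unfolding set_lebesgue_integral_def
    by (intro Bochner_Integration.integral_cong) (use assms(2) in \<open>auto simp: indicator_def\<close>)
  also have "\<dots> = integral {a..b} g"
    using assms(1) by (intro set_borel_integral_eq_integral borel_integrable_atLeastAtMost')
  finally show ?thesis .
qed

lemma integral_abs_le_nn_integral:
  fixes g :: "real \<Rightarrow> real"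
  assumes "continuous_on {a..b} g" "(\<integral>\<^sup>+ x. ennreal \<bar>g x\<bar> \<partial>lborel) < ennreal C"
  shows "integral {a..b} (\<lambda>x. \<bar>g x\<bar>) \<le> C"
proof -
  let ?I = "integral {a..b} (\<lambda>x. \<bar>g x\<bar>)"
  have int: "((\<lambda>x. \<bar>g x\<bar>) has_integral ?I) {a..b}"
    using assms(1) by (intro integrable_integral integrable_continuous_interval continuous_intros)
  then have "ennreal ?I = (\<integral>\<^sup>+ x. ennreal (indicator {a..b} x * \<bar>g x\<bar>) \<partial>lborel)"
    by (simp add: nn_integral_has_integral_lebesgue)
  also have "\<dots> \<le> (\<integral>\<^sup>+ x. ennreal \<bar>g x\<bar> \<partial>lborel)"
    by (intro nn_integral_mono ennreal_leI) (auto simp: indicator_def)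
  finally have "ennreal ?I < ennreal C"
    using assms(2) by simp
  moreover have "0 \<le> ?I"
    using int by (intro integral_nonneg) (auto dest: has_integral_integrable)
  ultimately show ?thesis
    by (simp add: ennreal_less_iff)
qed

lemma tendsto_zero_by_odd_derivative_transfer:
  fixes J :: "'a \<Rightarrow> nat \<Rightarrow> nat \<Rightarrow> nat \<Rightarrow> real"
  assumes parts: "\<And>p q c. p < N \<Longrightarrow> q < N \<Longrightarrow>
      eventually (\<lambda>a. J a (Suc p) q c + J a p (Suc q) c + J a p q (Suc c) = 0) F"
    and boundary: "\<And>p c. p < N \<Longrightarrow> ((\<lambda>a. J a p 0 (Suc c)) \<longlongrightarrow> 0) F"
    and sym: "\<And>a p q c. J a p q c = J a q p c"
    and "odd N"
  shows "((\<lambda>a. J a N 0 0) \<longlongrightarrow> 0) F"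
proof -
  have transfer: "((\<lambda>a. J a p q c - (-1) ^ q * J a (p + q) 0 c) \<longlongrightarrow> 0) F"
    if "p + q + c \<le> N" for p q c
    using that
  proof (induction q arbitrary: p c)
    case 0
    then show ?case by simp
  next
    case (Suc q)
    have "((\<lambda>a. - (J a (Suc p) q c - (-1) ^ q * J a (Suc p + q) 0 c)
                - (J a p q (Suc c) - (-1) ^ q * J a (p + q) 0 (Suc c))
                - (-1) ^ q * J a (p + q) 0 (Suc c)) \<longlongrightarrow> - 0 - 0 - (-1) ^ q * 0) F"
      using Suc by (intro tendsto_intros Suc.IH boundary) auto
    moreover have "eventually (\<lambda>a. - (J a (Suc p) q c - (-1) ^ q * J a (Suc p + q) 0 c)
                - (J a p q (Suc c) - (-1) ^ q * J a (p + q) 0 (Suc c))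
                - (-1) ^ q * J a (p + q) 0 (Suc c)
              = J a p (Suc q) c - (-1) ^ Suc q * J a (p + Suc q) 0 c) F"
      using parts[of p q c] Suc.prems by (simp add: algebra_simps)
    ultimately show ?case
      by (simp add: Lim_transform_eventually)
  qed
  have "((\<lambda>a. J a 0 N 0 - (-1) ^ N * J a N 0 0) \<longlongrightarrow> 0) F"
    using transfer[of 0 N 0] by simp
  then have "((\<lambda>a. 2 * J a N 0 0) \<longlongrightarrow> 2 * 0) F"
    using \<open>odd N\<close> sym by simp
  then show ?thesis
    by (simp only: tendsto_mult_left_iff zero_neq_numeral not_False_eq_True)
qed

definition deriv_pair_integral ::
    "real \<Rightarrow> (real \<Rightarrow> real) \<Rightarrow> (real \<Rightarrow> real) \<Rightarrow> nat \<Rightarrow> nat \<Rightarrow> nat \<Rightarrow> real" where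
  "deriv_pair_integral R v \<phi> p q c =
     integral {-R..R} (\<lambda>x. (deriv ^^ Suc p) v x * (deriv ^^ Suc q) v x * (deriv ^^ c) \<phi> x)"

lemma deriv_pair_integral_by_parts:
  assumes v: "Ck (Suc N) v" and \<phi>: "Cinf \<phi>" and "0 \<le> B" "B < R"
    and vanish: "\<And>x. B < \<bar>x\<bar> \<Longrightarrow> \<phi> x = 0" and "p < N" "q < N"
  shows "deriv_pair_integral R v \<phi> (Suc p) q c + deriv_pair_integral R v \<phi> p (Suc q) c
       + deriv_pair_integral R v \<phi> p q (Suc c) = 0"
  unfolding deriv_pair_integral_def
proof (rule integral_product3_by_parts)
  show "(deriv ^^ c) \<phi> (-R) = 0" "(deriv ^^ c) \<phi> R = 0"
    using assms(3,4) by (auto intro: deriv_iterate_vanishes_outside[OF vanish])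
qed (use assms in \<open>auto simp del: funpow.simps intro: Ck_has_real_derivative Ck_continuous_on
                                Cinf_has_real_derivative Cinf_continuous_on\<close>)

lemma lborel_integral_eq_deriv_pair_integral:
  assumes v: "Ck (Suc N) v" and \<phi>: "Cinf \<phi>" and "B \<le> R"
    and vanish: "\<And>x. B < \<bar>x\<bar> \<Longrightarrow> \<phi> x = 0" and "p \<le> N" "q \<le> N"
  shows "(\<integral>x. (deriv ^^ Suc p) v x * (deriv ^^ Suc q) v x * (deriv ^^ c) \<phi> x \<partial>lborel)
       = deriv_pair_integral R v \<phi> p q c"
  unfolding deriv_pair_integral_def
proof (rule lborel_integral_eq_integral_interval)
  show "continuous_on {-R..R} (\<lambda>x. (deriv ^^ Suc p) v x * (deriv ^^ Suc q) v x * (deriv ^^ c) \<phi> x)"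
    using assms by (intro continuous_intros Ck_continuous_on[OF v] Cinf_continuous_on) auto
  show "(deriv ^^ Suc p) v x * (deriv ^^ Suc q) v x * (deriv ^^ c) \<phi> x = 0" if "x \<notin> {-R..R}" for x
  proof -
    have "B < \<bar>x\<bar>"
      using that \<open>B \<le> R\<close> by auto
    then show ?thesis
      by (simp del: funpow.simps add: deriv_iterate_vanishes_outside[OF vanish])
  qed
qed

lemma deriv_pair_integral_bound:
  assumes v: "Ck (Suc N) v" and \<phi>: "Cinf \<phi>" and "0 \<le> R" "p \<le> N"
    and K: "\<And>x. \<bar>(deriv ^^ Suc p) v x\<bar> \<le> K"
    and M: "\<And>x. x \<in> {-R..R} \<Longrightarrow> \<bar>(deriv ^^ c) \<phi> x\<bar> \<le> M"
    and L: "(\<integral>\<^sup>+ x. ennreal \<bar>deriv v x\<bar> \<partial>lborel) < ennreal L"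
  shows "\<bar>deriv_pair_integral R v \<phi> p 0 c\<bar> \<le> K * M * L"
proof -
  have "0 \<le> K" "0 \<le> M"
    using K[of 0] M[of 0] \<open>0 \<le> R\<close> by auto
  have v': "continuous_on {-R..R} (deriv v)"
    using Ck_continuous_on[OF v, of 1] by simp
  have "\<bar>deriv_pair_integral R v \<phi> p 0 c\<bar> \<le> integral {-R..R} (\<lambda>x. K * M * \<bar>deriv v x\<bar>)"
    unfolding deriv_pair_integral_def
  proof (subst real_norm_def [symmetric], rule integral_norm_bound_integral)
    show "(\<lambda>x. (deriv ^^ Suc p) v x * (deriv ^^ Suc 0) v x * (deriv ^^ c) \<phi> x) integrable_on {-R..R}"
      using assms by (intro integrable_continuous_interval continuous_intros
                        Ck_continuous_on[OF v] Cinf_continuous_on) auto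
    show "(\<lambda>x. K * M * \<bar>deriv v x\<bar>) integrable_on {-R..R}"
      using v' by (intro integrable_continuous_interval continuous_on_mult_left continuous_on_rabs)
    fix x assume "x \<in> {-R..R}"
    then have "\<bar>(deriv ^^ Suc p) v x\<bar> * \<bar>(deriv ^^ c) \<phi> x\<bar> \<le> K * M"
      using K M \<open>0 \<le> K\<close> by (intro mult_mono) auto
    then have "\<bar>(deriv ^^ Suc p) v x\<bar> * \<bar>(deriv ^^ c) \<phi> x\<bar> * \<bar>deriv v x\<bar> \<le> K * M * \<bar>deriv v x\<bar>"
      by (rule mult_right_mono) simp
    then show "norm ((deriv ^^ Suc p) v x * (deriv ^^ Suc 0) v x * (deriv ^^ c) \<phi> x)
             \<le> K * M * \<bar>deriv v x\<bar>"
      by (simp add: abs_mult algebra_simps)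
  qed
  also have "\<dots> = K * M * integral {-R..R} (\<lambda>x. \<bar>deriv v x\<bar>)"
    by simp
  also have "\<dots> \<le> K * M * L"
    using integral_abs_le_nn_integral[OF v' L] \<open>0 \<le> K\<close> \<open>0 \<le> M\<close>
    by (intro mult_left_mono) auto
  finally show ?thesis .
qed

lemma power_deriv_pair_integral_tendsto_zero:
  assumes "p < N" and \<phi>: "Cinf \<phi>" and "0 \<le> R"
    and scale: "\<forall>\<^sub>F a in at_right 0. Ck (Suc N) (v a)
        \<and> (\<forall>x. \<bar>(deriv ^^ Suc p) (v a) x\<bar> \<le> K / a ^ Suc p)
        \<and> (\<integral>\<^sup>+ x. ennreal \<bar>deriv (v a) x\<bar> \<partial>lborel) < ennreal L"
  shows "((\<lambda>a. a ^ Suc N * deriv_pair_integral R (v a) \<phi> p 0 c) \<longlongrightarrow> 0) (at_right 0)"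
proof -
  obtain M where M: "\<And>x. x \<in> {-R..R} \<Longrightarrow> \<bar>(deriv ^^ c) \<phi> x\<bar> \<le> M"
    using compact_imp_bounded[OF compact_continuous_image[OF Cinf_continuous_on[OF \<phi>, of _ c]
          compact_Icc[of "-R" R]]]
    unfolding bounded_iff real_norm_def by blast
  have "\<forall>\<^sub>F a in at_right 0. norm (a ^ Suc N * deriv_pair_integral R (v a) \<phi> p 0 c)
          \<le> K * M * L * a ^ (N - p)"
    using scale eventually_at_right_less[of 0]
  proof eventually_elim
    case (elim a)
    then have "\<bar>deriv_pair_integral R (v a) \<phi> p 0 c\<bar> \<le> K / a ^ Suc p * M * L"
      using \<open>p < N\<close> \<open>0 \<le> R\<close> M \<phi>
      by (intro deriv_pair_integral_bound[where N = N]) auto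
    then have "a ^ Suc p * \<bar>deriv_pair_integral R (v a) \<phi> p 0 c\<bar> \<le> K * M * L"
      using \<open>0 < a\<close> by (simp add: field_simps)
    moreover have "a ^ Suc N = a ^ (N - p) * a ^ Suc p"
      using \<open>p < N\<close> by (simp flip: power_add)
    ultimately show ?case
      using \<open>0 < a\<close> by (simp add: abs_mult mult_left_mono mult.commute mult.left_commute)
  qed
  moreover have "((\<lambda>a. K * M * L * a ^ (N - p)) \<longlongrightarrow> 0) (at_right 0)"
    using \<open>p < N\<close> by (auto intro!: tendsto_eq_intros simp: power_0_left)
  ultimately show ?thesis
    by (rule Lim_null_comparison)
qed

lemma scaled_deriv_pair_integral_tendsto_zero:
  fixes v :: "real \<Rightarrow> real \<Rightarrow> real"
  assumes "odd N" and \<phi>: "Cinf \<phi>" and "0 \<le> B" "B < R"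
    and vanish: "\<And>x. B < \<bar>x\<bar> \<Longrightarrow> \<phi> x = 0"
    and family: "\<forall>\<^sub>F a in at_right 0. Ck (Suc N) (v a)
        \<and> (\<forall>p<N. \<forall>x. \<bar>(deriv ^^ Suc p) (v a) x\<bar> \<le> K / a ^ Suc p)
        \<and> (\<integral>\<^sup>+ x. ennreal \<bar>deriv (v a) x\<bar> \<partial>lborel) < ennreal L"
  shows "((\<lambda>a. a ^ Suc N * deriv_pair_integral R (v a) \<phi> N 0 0) \<longlongrightarrow> 0) (at_right 0)"
proof (rule tendsto_zero_by_odd_derivative_transfer[OF _ _ _ \<open>odd N\<close>,
    where J = "\<lambda>a p q c. a ^ Suc N * deriv_pair_integral R (v a) \<phi> p q c"])
  fix p q c assume pq: "p < N" "q < N"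
  show "\<forall>\<^sub>F a in at_right 0. a ^ Suc N * deriv_pair_integral R (v a) \<phi> (Suc p) q c
      + a ^ Suc N * deriv_pair_integral R (v a) \<phi> p (Suc q) c
      + a ^ Suc N * deriv_pair_integral R (v a) \<phi> p q (Suc c) = 0"
    using family
  proof eventually_elim
    case (elim a)
    then show ?case
      using deriv_pair_integral_by_parts[OF _ \<phi> \<open>0 \<le> B\<close> \<open>B < R\<close> vanish pq, of "v a" c]
      by (simp flip: distrib_left)
  qed
next
  fix p c assume "p < N"
  from family have "\<forall>\<^sub>F a in at_right 0. Ck (Suc N) (v a)
      \<and> (\<forall>x. \<bar>(deriv ^^ Suc p) (v a) x\<bar> \<le> K / a ^ Suc p)
      \<and> (\<integral>\<^sup>+ x. ennreal \<bar>deriv (v a) x\<bar> \<partial>lborel) < ennreal L"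
    by eventually_elim (use \<open>p < N\<close> in blast)
  then show "((\<lambda>a. a ^ Suc N * deriv_pair_integral R (v a) \<phi> p 0 (Suc c)) \<longlongrightarrow> 0) (at_right 0)"
    using \<open>0 \<le> B\<close> \<open>B < R\<close> by (intro power_deriv_pair_integral_tendsto_zero[OF \<open>p < N\<close> \<phi>]) auto
qed (simp add: deriv_pair_integral_def mult_ac)

lemma scaled_odd_derivative_integral_tendsto_zero:
  fixes v :: "real \<Rightarrow> real \<Rightarrow> real"
  assumes "odd N" and \<phi>: "Cinf \<phi>" "has_compact_support \<phi>"
    and family: "\<forall>\<^sub>F a in at_right 0. Ck (Suc N) (v a)
        \<and> (\<forall>p<N. \<forall>x. \<bar>(deriv ^^ Suc p) (v a) x\<bar> \<le> K / a ^ Suc p)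
        \<and> (\<integral>\<^sup>+ x. ennreal \<bar>deriv (v a) x\<bar> \<partial>lborel) < ennreal L"
  shows "((\<lambda>a. a ^ Suc N * (\<integral>x. (deriv ^^ Suc N) (v a) x * deriv (v a) x * \<phi> x \<partial>lborel))
          \<longlongrightarrow> 0) (at_right 0)"
proof -
  obtain B where "0 \<le> B" and vanish: "\<And>x. B < \<bar>x\<bar> \<Longrightarrow> \<phi> x = 0"
    using has_compact_support_vanishes_outside[OF \<phi>(2)] by blast
  have "B < B + 1" "B \<le> B + 1" by simp_all
  have "\<forall>\<^sub>F a in at_right 0. a ^ Suc N * deriv_pair_integral (B + 1) (v a) \<phi> N 0 0
      = a ^ Suc N * (\<integral>x. (deriv ^^ Suc N) (v a) x * deriv (v a) x * \<phi> x \<partial>lborel)"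
    using family
  proof eventually_elim
    case (elim a)
    then show ?case
      using lborel_integral_eq_deriv_pair_integral[OF conjunct1[OF elim] \<phi>(1) \<open>B \<le> B + 1\<close> vanish,
          of N 0 0]
      by simp
  qed
  with scaled_deriv_pair_integral_tendsto_zero[OF \<open>odd N\<close> \<phi>(1) \<open>0 \<le> B\<close> \<open>B < B + 1\<close> vanish family]
  show ?thesis
    by (rule Lim_transform_eventually)
qed

theorem lemma2:
  fixes n :: nat and A1 A2 A4 \<alpha>0 :: real
    and u ubar :: "real \<Rightarrow> real \<Rightarrow> real" and f :: "real \<Rightarrow> real"
  assumes n: "n \<ge> 1"
    and A: "A1 > 0" "A2 > 0" "A4 > 0" and a0: "\<alpha>0 > 0"
    and u_C1: "\<And>\<alpha>. \<alpha> \<in> {0<..<\<alpha>0} \<Longrightarrow> Ck 1 (u \<alpha>)"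
    and ubar_C2n: "\<And>\<alpha>. \<alpha> \<in> {0<..<\<alpha>0} \<Longrightarrow> Ck (2*n) (ubar \<alpha>)"
    and u_bd: "\<And>\<alpha> x. \<alpha> \<in> {0<..<\<alpha>0} \<Longrightarrow> \<bar>u \<alpha> x\<bar> < A1"
    and ubar_bd: "\<And>\<alpha> x. \<alpha> \<in> {0<..<\<alpha>0} \<Longrightarrow> \<bar>ubar \<alpha> x\<bar> < A1"
    and u_tv: "\<And>\<alpha>. \<alpha> \<in> {0<..<\<alpha>0} \<Longrightarrow>
                 (\<integral>\<^sup>+ x. ennreal \<bar>deriv (u \<alpha>) x\<bar> \<partial>lborel) < ennreal A2"
    and ubar_tv: "\<And>\<alpha>. \<alpha> \<in> {0<..<\<alpha>0} \<Longrightarrow>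
                 (\<integral>\<^sup>+ x. ennreal \<bar>deriv (ubar \<alpha>) x\<bar> \<partial>lborel) < ennreal A2"
    and ubar_deriv_bd: "\<And>\<alpha> j. \<alpha> \<in> {0<..<\<alpha>0} \<Longrightarrow> 1 \<le> j \<Longrightarrow> j \<le> 2*n - 1 \<Longrightarrow>
                 \<exists>B < A4 / \<alpha> ^ j. \<forall>x. \<bar>(deriv ^^ j) (ubar \<alpha>) x\<bar> \<le> B"
    and f_smooth: "Cinf f"
    and f_supp: "has_compact_support f"
  shows "((\<lambda>\<alpha>. \<alpha> ^ (2*n) *
            (\<integral>x. (deriv ^^ (2*n)) (ubar \<alpha>) x * deriv (ubar \<alpha>) x * f x \<partial>lborel))
          \<longlongrightarrow> 0) (at_right 0)"
proof -
  define N where "N = 2 * n - 1"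
  have N: "2 * n = Suc N" "odd N"
    using n by (auto simp: N_def)
  have "\<forall>\<^sub>F a in at_right 0. a \<in> {0<..<\<alpha>0}"
    using a0 by (auto simp: eventually_at_right)
  then have "\<forall>\<^sub>F a in at_right 0. Ck (Suc N) (ubar a)
      \<and> (\<forall>p<N. \<forall>x. \<bar>(deriv ^^ Suc p) (ubar a) x\<bar> \<le> A4 / a ^ Suc p)
      \<and> (\<integral>\<^sup>+ x. ennreal \<bar>deriv (ubar a) x\<bar> \<partial>lborel) < ennreal A2"
  proof eventually_elim
    case (elim a)
    have "\<bar>(deriv ^^ Suc p) (ubar a) x\<bar> \<le> A4 / a ^ Suc p" if p: "p < N" for p x
    proof -
      obtain C where "C < A4 / a ^ Suc p" and C: "\<forall>x. \<bar>(deriv ^^ Suc p) (ubar a) x\<bar> \<le> C"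
        using ubar_deriv_bd[OF elim, of "Suc p"] p N by auto
      then show ?thesis
        using C[rule_format, of x] by linarith
    qed
    then show ?case
      using ubar_C2n[OF elim] ubar_tv[OF elim] N by simp
  qed
  from scaled_odd_derivative_integral_tendsto_zero[OF \<open>odd N\<close> f_smooth f_supp this]
  show ?thesis
    unfolding N(1) .
qed

end
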